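(* Let $\mathbf{X}\in\mathbb{R}^{d\times n}$, $\mathbf{W}^\star\in\mathbb{R}^{m\times d}$ and $\mathbf{Y}=\mathbf{W}^\star\mathbf{X}\in\mathbb{R}^{m\times n}$. Let $p=\operatorname{rank}(\mathbf{Y})$ and let $\sigma_1^\star\ge\sigma_2^\star\ge\dots\ge\sigma_p^\star>0$ be the nonzero singular values of $\mathbf{Y}$, with $\sigma_k^\star:=0$ for $k>p$. Let $1\le r\le p$ and let $\{(\mathbf{a}_k,\mathbf{b}_k)\}_{k=1}^r$ be the output of the Inexact Sequential Low-Rank procedure (described in the context) applied to $(\mathbf{X},\mathbf{Y})$ with target rank $r$, and let $\bm{\delta}_k$ be the corresponding numerical errors, with $\|\bm{\delta}_k\|_F>0$ for $k=1,\dots,r$ and the convention $\|\bm{\delta}_0\|_F:=0$. For $1\le k\le r$ define $$\mathcal{T}_k^\star:=\min\Big\{\min_{k<j\le p}|\sigma_k^\star-\sigma_j^\star|,\ \sigma_k^\star\Big\},\qquad E(k):=\sigma_{\max}(\mathbf{X})\sum_{k'=0}^{k-1}\|\bm{\delta}_{k'}\|_F\prod_{j=k'+1}^{k-1}\Big(2+\frac{6\sigma_j^\star}{\mathcal{T}_k^\star}\Big).$$ If $E(k)<\tfrac12\min_{k<j\le p}|\sigma_k^\star-\sigma_j^\star|$ for every $k\in\{1,\dots,r\}$, then $$\Big\|\mathbf{Y}-\sum_{k=1}^r\mathbf{b}_k\mathbf{a}_k^\top\mathbf{X}\Big\|_F\le\sum_{k=r+1}^{p}\sigma_k^\star+\s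igma_{\max}(\mathbf{X})\sum_{k=1}^{r}\sum_{k'=0}^{k}\|\bm{\delta}_{k'}\|_F\prod_{j=k'+1}^{k}\Big(2+\frac{6\sigma_j^\star}{\mathcal{T}_k^\star}\Big).$$
   Context: $\sigma_{\max}(\mathbf{X})$ is the largest singular value of $\mathbf{X}$; $\|\cdot\|_F$ is the Frobenius norm. Inexact Sequential Low-Rank procedure: set $\mathbf{Y}_1:=\mathbf{Y}$; for $k=1,\dots,r$, obtain vectors $\mathbf{a}_k\in\mathbb{R}^d,\mathbf{b}_k\in\mathbb{R}^m$ from an arbitrary (approximate) rank-1 solver applied to $(\mathbf{Y}_k,\mathbf{X})$, and set $\mathbf{Y}_{k+1}:=\mathbf{Y}_k-\mathbf{b}_k\mathbf{a}_k^\top\mathbf{X}$. Numerical error: for each $k$, let $(\overline{\mathbf{a}}_k,\overline{\mathbf{b}}_k)\in\arg\min_{\mathbf{a}\in\mathbb{R}^d,\mathbf{b}\in\mathbb{R}^m}\tfrac12\|\mathbf{Y}_k-\mathbf{b}\mathbf{a}^\top\mathbf{X}\|_F^2$ be an exact minimizer, and $\bm{\delta}_k:=\mathbf{b}_k\mathbf{a}_k^\top-\overline{\mathbf{b}}_k\overline{\mathbf{a}}_k^\top\in\mathbb{R}^{m\times d}$. *)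

theory Defs
  imports "HOL-Analysis.Analysis"
begin

text \<open>Matrices are HOL-Analysis matrices: R^{m x n} is real^'n^'m.
  The norm on real^'n^'m is the Frobenius norm.\<close>

definition outer :: "real^'m \<Rightarrow> real^'d \<Rightarrow> real^'d^'m" where
  "outer b a = (\<chi> i j. b $ i * a $ j)"

text \<open>sigma (indexed from 1) is the sequence of singular values of Y:
  sigma_1 >= ... >= sigma_p > 0 with p = rank Y, sigma_k = 0 for k > p, and
  Y = sum_{k=1}^p sigma_k u_k v_k^T for orthonormal families (u_k), (v_k) (an SVD).\<close>
definition singular_values :: "real^'n^'m \<Rightarrow> (nat \<Rightarrow> real) \<Rightarrow> bool" where
  "singular_values Y \<sigma> \<longleftrightarrow>
     (\<forall>k. k > rank Y \<longrightarrow> \<sigma> k = 0) \<and>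
     (\<forall>k\<in>{1..rank Y}. \<sigma> k > 0) \<and>
     (\<forall>j\<in>{1..rank Y}. \<forall>k\<in>{1..rank Y}. j \<le> k \<longrightarrow> \<sigma> k \<le> \<sigma> j) \<and>
     (\<exists>(u :: nat \<Rightarrow> real^'m) (v :: nat \<Rightarrow> real^'n).
        (\<forall>j\<in>{1..rank Y}. \<forall>k\<in>{1..rank Y}. u j \<bullet> u k = (if j = k then 1 else 0)) \<and>
        (\<forall>j\<in>{1..rank Y}. \<forall>k\<in>{1..rank Y}. v j \<bullet> v k = (if j = k then 1 else 0)) \<and>
        Y = (\<Sum>k\<in>{1..rank Y}. \<sigma> k *\<^sub>R outer (u k) (v k)))"

text \<open>Residuals of the Sequential Low-Rank procedure:
  seq_resid X Y a b (k-1) is Y_k, i.e. Y_1 = Y and Y_{k+1} = Y_k - b_k a_k^T X.\<close>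
primrec seq_resid :: "real^'n^'d \<Rightarrow> real^'n^'m \<Rightarrow> (nat \<Rightarrow> real^'d) \<Rightarrow> (nat \<Rightarrow> real^'m)
    \<Rightarrow> nat \<Rightarrow> real^'n^'m" where
  "seq_resid X Y a b 0 = Y"
| "seq_resid X Y a b (Suc k) = seq_resid X Y a b k - outer (b (Suc k)) (a (Suc k)) ** X"

definition exact_rank1_min :: "real^'n^'m \<Rightarrow> real^'n^'d \<Rightarrow> real^'d \<Rightarrow> real^'m \<Rightarrow> bool" where
  "exact_rank1_min Yk X a' b' \<longleftrightarrow>
     (\<forall>a b. 1/2 * (norm (Yk - outer b' a' ** X))\<^sup>2 \<le> 1/2 * (norm (Yk - outer b a ** X))\<^sup>2)"

text \<open>T*_k = min { min_{k<j<=p} |sigma_k - sigma_j|, sigma_k } (inner min over empty set = +infinity).\<close>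
definition Tstar :: "(nat \<Rightarrow> real) \<Rightarrow> nat \<Rightarrow> nat \<Rightarrow> real" where
  "Tstar \<sigma> p k = Min ({\<bar>\<sigma> k - \<sigma> j\<bar> | j. k < j \<and> j \<le> p} \<union> {\<sigma> k})"

end

theory Submission
  imports Defs
begin

text \<open>
  Write \<open>best_rank_error s N\<close> for the distance from \<open>N\<close> to the projections of its columns
  onto subspaces of dimension at most \<open>s\<close>. Every residual \<open>Y\<^sub>k\<close> has the form \<open>W\<^sub>k X\<close>, so an
  exact rank-one minimizer \<open>B\<^sub>k\<close> over the matrices \<open>b a\<^sup>T X\<close> is a best rank-one approximation
  of \<open>Y\<^sub>k\<close>, and deflating by it costs exactly one rank:
  \<open>best_rank_error s (Y\<^sub>k - B\<^sub>k) \<le> best_rank_error (s + 1) Y\<^sub>k\<close>.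
  The inexact step differs from \<open>B\<^sub>k\<close> by \<open>\<delta>\<^sub>k X\<close>, of norm at most \<open>\<sigma>_max(X) \<parallel>\<delta>\<^sub>k\<parallel>\<close>, and
  \<open>best_rank_error s\<close> is 1-Lipschitz. By induction the final residual has norm at most
  \<open>best_rank_error r Y + \<sigma>_max(X) \<Sum>\<^sub>k \<parallel>\<delta>\<^sub>k\<parallel>\<close>, and projecting onto the top \<open>r\<close> left
  singular vectors of \<open>Y\<close> bounds the first term by the tail \<open>\<Sum>\<^sub>k\<^sub>>\<^sub>r \<sigma>\<^sub>k\<close>. This bound is
  sharper than the stated one.
\<close>

lemma outer_nth [simp]: "outer q x $ i $ j = q $ i * x $ j"
  by (simp add: outer_def)

lemma outer_add_right: "outer q (x + y) = outer q x + outer q y"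
  by (simp add: vec_eq_iff distrib_left)

lemma outer_scaleR_left: "outer (c *\<^sub>R q) x = c *\<^sub>R outer q x"
  by (simp add: vec_eq_iff)

lemma outer_scaleR_right: "outer q (c *\<^sub>R x) = c *\<^sub>R outer q x"
  by (simp add: vec_eq_iff)

lemma outer_matrix_mult: "outer b a ** X = outer b (a v* X)"
  by (simp add: vec_eq_iff matrix_matrix_mult_def vector_matrix_mult_def sum_distrib_left
      mult.assoc)

lemma vector_matrix_mult_outer: "w v* outer q x = (w \<bullet> q) *\<^sub>R x"
  by (simp add: vec_eq_iff vector_matrix_mult_def inner_vec_def sum_distrib_right mult.assoc)

lemma vector_matrix_mult_sum: "w v* sum f S = (\<Sum>k\<in>S. w v* (f k :: real^'n^'m))"
  by (induction S rule: infinite_finite_induct) (auto simp: vector_matrix_mult_add_rdistrib)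

lemma vector_matrix_mult_component: "(q v* M) $ j = q \<bullet> column j M"
  by (simp add: vector_matrix_mult_def column_def inner_vec_def)

lemma matrix_mult_row: "(A ** B) $ i = A $ i v* B"
  by (simp add: vec_eq_iff matrix_matrix_mult_def vector_matrix_mult_def)

lemma matrix_add_rdistrib: "(A + B) ** (C :: real^'n^'d) = A ** C + (B :: real^'d^'m) ** C"
  by (simp add: vec_eq_iff matrix_matrix_mult_def distrib_right sum.distrib)

lemma matrix_diff_rdistrib: "(A - B) ** (C :: real^'n^'d) = A ** C - (B :: real^'d^'m) ** C"
  by (simp add: vec_eq_iff matrix_matrix_mult_def left_diff_distrib sum_subtractf)

lemma inner_outer_outer: "outer q x \<bullet> outer q' y = (q \<bullet> q') * (x \<bullet> y)"
proof -
  have "outer q x \<bullet> outer q' y = (\<Sum>i\<in>UNIV. \<Sum>j\<in>UNIV. (q$i * q'$i) * (x$j * y$j))"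
    by (simp add: inner_vec_def mult_ac)
  also have "\<dots> = (q \<bullet> q') * (x \<bullet> y)"
    by (simp add: inner_vec_def sum_product)
  finally show ?thesis .
qed

lemma inner_outer_right: "(N :: real^'n^'m) \<bullet> outer q x = (q v* N) \<bullet> x"
  by (simp add: inner_vec_def vector_matrix_mult_def sum_distrib_right sum_distrib_left
      sum.swap[of _ "UNIV :: 'n set"] algebra_simps)

lemma norm_outer: "norm (outer q x) = norm q * norm x"
proof -
  have "(norm (outer q x))\<^sup>2 = (norm q * norm x)\<^sup>2"
    by (simp add: power2_norm_eq_inner inner_outer_outer power_mult_distrib)
  then show ?thesis
    by simp
qed

lemma norm_matrix_sq_rows: "(norm (A :: real^'n^'m))\<^sup>2 = (\<Sum>i\<in>UNIV. (norm (A $ i))\<^sup>2)"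
  by (simp add: norm_vec_def L2_set_def sum_nonneg)

lemma norm_vector_matrix_mult_sq_columns:
  "(norm (q v* (M :: real^'n^'m)))\<^sup>2 = (\<Sum>j\<in>UNIV. (q \<bullet> column j M)\<^sup>2)"
proof -
  have "(norm (q v* M))\<^sup>2 = (\<Sum>j\<in>UNIV. ((q v* M) $ j)\<^sup>2)"
    unfolding power2_norm_eq_inner by (simp add: inner_vec_def power2_eq_square)
  then show ?thesis
    by (simp only: vector_matrix_mult_component)
qed

lemma norm_diff_sq: "(norm (x - y))\<^sup>2 = x \<bullet> x - 2 * (x \<bullet> y) + y \<bullet> (y :: 'a::real_inner)"
  by (simp add: power2_norm_eq_inner inner_diff_left inner_diff_right inner_commute)

definition orthonormal :: "'a::real_inner set \<Rightarrow> bool" where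
  "orthonormal F \<longleftrightarrow> pairwise orthogonal F \<and> (\<forall>q\<in>F. norm q = 1)"

lemma orthonormal_inner:
  assumes "orthonormal F" "q \<in> F" "q' \<in> F"
  shows "q \<bullet> q' = (if q = q' then 1 else 0)"
  using assms by (auto simp: orthonormal_def pairwise_def orthogonal_def dot_square_norm)

lemma orthonormal_independent: "orthonormal F \<Longrightarrow> independent F"
  by (rule pairwise_orthogonal_independent) (auto simp: orthonormal_def)

lemma orthonormal_finite: "orthonormal (F :: 'a::euclidean_space set) \<Longrightarrow> finite F"
  using orthonormal_independent finiteI_independent by blast

lemma orthonormal_card_eq:
  assumes "orthonormal F" "orthonormal G" "span F = span G"
  shows "card F = card G"
  using assms dim_span_eq_card_independent orthonormal_independent by metis

lemma norm_sum_orthonormal_sq: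
  fixes e :: "'k \<Rightarrow> 'a::real_inner"
  assumes "finite K" "\<forall>j\<in>K. \<forall>k\<in>K. e j \<bullet> e k = (if j = k then 1 else 0)"
  shows "(norm (\<Sum>k\<in>K. c k *\<^sub>R e k))\<^sup>2 = (\<Sum>k\<in>K. (c k)\<^sup>2)"
proof -
  have "(norm (\<Sum>k\<in>K. c k *\<^sub>R e k))\<^sup>2 = (\<Sum>k\<in>K. \<Sum>j\<in>K. c k * (c j * (e j \<bullet> e k)))"
    by (simp add: power2_norm_eq_inner inner_sum_left inner_sum_right sum_distrib_left)
  also have "\<dots> = (\<Sum>k\<in>K. \<Sum>j\<in>K. if j = k then (c k)\<^sup>2 else 0)"
    using assms(2) by (intro sum.cong refl) (auto simp: power2_eq_square)
  finally show ?thesis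
    using assms(1) by simp
qed

lemma bessel_inequality:
  fixes w :: "'a::real_inner"
  assumes "finite K" "\<forall>j\<in>K. \<forall>k\<in>K. e j \<bullet> e k = (if j = k then 1 else 0)"
  shows "(\<Sum>k\<in>K. (w \<bullet> e k)\<^sup>2) \<le> (norm w)\<^sup>2"
proof -
  define s where "s = (\<Sum>k\<in>K. (w \<bullet> e k) *\<^sub>R e k)"
  have "s \<bullet> s = (\<Sum>k\<in>K. (w \<bullet> e k)\<^sup>2)"
    using norm_sum_orthonormal_sq[OF assms] by (simp add: s_def power2_norm_eq_inner)
  moreover have "w \<bullet> s = (\<Sum>k\<in>K. (w \<bullet> e k)\<^sup>2)"
    by (simp add: s_def inner_sum_right power2_eq_square)
  moreover have "0 \<le> w \<bullet> w - 2 * (w \<bullet> s) + s \<bullet> s"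
    using norm_diff_sq[of w s] by (metis zero_le_power2)
  ultimately show ?thesis
    by (simp add: power2_norm_eq_inner)
qed

definition orth_proj :: "'a::real_inner set \<Rightarrow> 'a \<Rightarrow> 'a" where
  "orth_proj F x = (\<Sum>q\<in>F. (q \<bullet> x) *\<^sub>R q)"

lemma orth_proj_in_span: "orth_proj F x \<in> span F"
  unfolding orth_proj_def by (intro span_sum span_scale span_base)

lemma orth_proj_orthogonal:
  assumes "orthonormal F" "finite F" "y \<in> span F"
  shows "y \<bullet> (x - orth_proj F x) = 0"
proof -
  have "f \<bullet> (x - orth_proj F x) = 0" if "f \<in> F" for f
  proof -
    have "f \<bullet> orth_proj F x = (\<Sum>q\<in>F. if f = q then q \<bullet> x else 0)"
      unfolding orth_proj_def inner_sum_right
      by (intro sum.cong refl) (simp add: orthonormal_inner[OF assms(1) that])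
    then show ?thesis
      using assms(2) that by (simp add: inner_diff_right)
  qed
  then have "orthogonal (x - orth_proj F x) y"
    by (intro orthogonal_to_span[OF assms(3)]) (simp add: orthogonal_def inner_commute)
  then show ?thesis
    by (simp add: orthogonal_def inner_commute)
qed

lemma orth_proj_span_eq:
  assumes "orthonormal F" "finite F" "orthonormal G" "finite G" "span F = span G"
  shows "orth_proj F x = orth_proj G x"
proof -
  let ?d = "orth_proj F x - orth_proj G x"
  have d: "?d \<in> span F"
    using orth_proj_in_span[of F x] orth_proj_in_span[of G x] assms(5) by (simp add: span_diff)
  have "?d \<bullet> ?d = ?d \<bullet> (x - orth_proj G x) - ?d \<bullet> (x - orth_proj F x)"
    by (simp add: inner_diff_right)
  also have "\<dots> = 0"
    using d assms by (simp add: orth_proj_orthogonal)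
  finally show ?thesis
    by simp
qed

lemma norm_orth_proj_sq:
  assumes "orthonormal F" "finite F"
  shows "(norm (orth_proj F x))\<^sup>2 = (\<Sum>q\<in>F. (q \<bullet> x)\<^sup>2)"
  unfolding orth_proj_def
  using norm_sum_orthonormal_sq[of F id "\<lambda>q. q \<bullet> x"] assms orthonormal_inner[OF assms(1)]
  by simp

definition left_proj :: "(real^'m) set \<Rightarrow> real^'n^'m \<Rightarrow> real^'n^'m" where
  "left_proj F N = (\<Sum>q\<in>F. outer q (q v* N))"

lemma left_proj_add: "left_proj F (N + D) = left_proj F N + left_proj F D"
  by (simp add: left_proj_def vector_matrix_mult_add_rdistrib outer_add_right sum.distrib)

lemma norm_diff_left_proj_sq:
  assumes "orthonormal F"
  shows "(norm (N - left_proj F N))\<^sup>2 = (norm N)\<^sup>2 - (\<Sum>q\<in>F. (norm (q v* N))\<^sup>2)"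
proof -
  have fin: "finite F"
    using assms by (rule orthonormal_finite)
  have cross: "N \<bullet> left_proj F N = (\<Sum>q\<in>F. (norm (q v* N))\<^sup>2)"
    unfolding left_proj_def inner_sum_right inner_outer_right power2_norm_eq_inner ..
  have "left_proj F N \<bullet> left_proj F N = (\<Sum>q\<in>F. \<Sum>q'\<in>F. (q' \<bullet> q) * ((q' v* N) \<bullet> (q v* N)))"
    by (simp add: left_proj_def inner_sum_right inner_sum_left inner_outer_outer)
  also have "\<dots> = (\<Sum>q\<in>F. \<Sum>q'\<in>F. if q' = q then (norm (q v* N))\<^sup>2 else 0)"
    by (intro sum.cong refl) (simp add: orthonormal_inner[OF assms] power2_norm_eq_inner)
  also have "\<dots> = (\<Sum>q\<in>F. (norm (q v* N))\<^sup>2)"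
    using fin by simp
  finally have "left_proj F N \<bullet> left_proj F N = (\<Sum>q\<in>F. (norm (q v* N))\<^sup>2)" .
  with cross norm_diff_sq[of N "left_proj F N"] show ?thesis
    by (simp add: power2_norm_eq_inner)
qed

lemma norm_diff_left_proj_le:
  assumes "orthonormal F"
  shows "norm (N - left_proj F N) \<le> norm N"
proof -
  have "(norm (N - left_proj F N))\<^sup>2 \<le> (norm N)\<^sup>2"
    using norm_diff_left_proj_sq[OF assms, of N] by (simp add: sum_nonneg)
  then show ?thesis
    by (rule power2_le_imp_le) simp
qed

lemma sum_norm_vector_matrix_mult_span_eq:
  fixes M :: "real^'n^'m"
  assumes "orthonormal F" "orthonormal G" "span F = span G"
  shows "(\<Sum>q\<in>F. (norm (q v* M))\<^sup>2) = (\<Sum>q\<in>G. (norm (q v* M))\<^sup>2)"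
proof -
  have fin: "finite F" "finite G"
    using assms orthonormal_finite by auto
  have "(\<Sum>q\<in>F. (norm (q v* M))\<^sup>2) = (\<Sum>j\<in>UNIV. (norm (orth_proj F (column j M)))\<^sup>2)"
    by (simp add: norm_vector_matrix_mult_sq_columns norm_orth_proj_sq[OF assms(1) fin(1)]
        sum.swap[of _ F])
  also have "\<dots> = (\<Sum>j\<in>UNIV. (norm (orth_proj G (column j M)))\<^sup>2)"
    using orth_proj_span_eq[OF assms(1) fin(1) assms(2) fin(2) assms(3)] by simp
  also have "\<dots> = (\<Sum>q\<in>G. (norm (q v* M))\<^sup>2)"
    by (simp add: norm_vector_matrix_mult_sq_columns norm_orth_proj_sq[OF assms(2) fin(2)]
        sum.swap[of _ G])
  finally show ?thesis .
qed

lemma orthonormal_basis_insert_unit: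
  fixes e :: "'a::euclidean_space"
  assumes V: "subspace V" and e: "e \<in> V" "norm e = 1"
  obtains G where "e \<notin> G" "orthonormal (insert e G)" "span (insert e G) = V"
    "\<forall>x\<in>G. x \<bullet> e = 0"
proof -
  define S where "S = {x \<in> V. x \<bullet> e = 0}"
  have "subspace S"
    using V unfolding subspace_def S_def by (auto simp: inner_add_left)
  then obtain G where G: "G \<subseteq> S" "pairwise orthogonal G" "\<And>x. x \<in> G \<Longrightarrow> norm x = 1"
    "independent G" "card G = dim S" "span G = S"
    using orthonormal_basis_subspace by blast
  have "e \<notin> G"
    using G(1) e(2) by (auto simp: S_def dot_square_norm)
  moreover have "orthonormal (insert e G)"
    using G(1-3) e(2)
    by (auto simp: S_def orthonormal_def pairwise_insert orthogonal_def inner_commute)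
  moreover have "span (insert e G) = V"
  proof
    show "span (insert e G) \<subseteq> V"
      using G(1) e(1) by (intro span_minimal[OF _ V]) (auto simp: S_def)
    show "V \<subseteq> span (insert e G)"
    proof
      fix x
      assume "x \<in> V"
      then have "x - (x \<bullet> e) *\<^sub>R e \<in> S"
        using V e by (simp add: S_def subspace_diff subspace_scale inner_diff_left dot_square_norm)
      then have "x - (x \<bullet> e) *\<^sub>R e \<in> span (insert e G)"
        using G(6) span_mono[of G "insert e G"] by blast
      then have "(x - (x \<bullet> e) *\<^sub>R e) + (x \<bullet> e) *\<^sub>R e \<in> span (insert e G)"
        by (intro span_add span_scale) (simp_all add: span_base)
      then show "x \<in> span (insert e G)"
        by simp
    qed
  qed
  moreover have "\<forall>x\<in>G. x \<bullet> e = 0"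
    using G(1) by (auto simp: S_def)
  ultimately show ?thesis
    using that by blast
qed

lemma orthonormal_split_off_orthogonal:
  fixes F :: "'a::euclidean_space set"
  assumes orth: "orthonormal F" and "F \<noteq> {}"
  obtains e G where "e \<notin> G" "orthonormal (insert e G)" "span (insert e G) = span F"
    "\<forall>q\<in>G. q \<bullet> u = 0"
proof (cases "\<forall>q\<in>F. q \<bullet> u = 0")
  case True
  from \<open>F \<noteq> {}\<close> obtain e where "e \<in> F"
    by blast
  then show ?thesis
    using that[of e "F - {e}"] orth True by (simp add: insert_absorb)
next
  case False
  define z where "z = orth_proj F u"
  have inner_u: "x \<bullet> u = x \<bullet> z" if "x \<in> span F" for x
    using orth_proj_orthogonal[OF orth orthonormal_finite[OF orth] that, of u]
    by (simp add: z_def inner_diff_right)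
  have "z \<noteq> 0"
    using False inner_u span_base by fastforce
  define e where "e = inverse (norm z) *\<^sub>R z"
  have "e \<in> span F" "norm e = 1"
    using \<open>z \<noteq> 0\<close> by (simp_all add: e_def z_def orth_proj_in_span span_scale)
  then obtain G where G: "e \<notin> G" "orthonormal (insert e G)" "span (insert e G) = span F"
    "\<forall>x\<in>G. x \<bullet> e = 0"
    using orthonormal_basis_insert_unit[OF subspace_span] by metis
  have "q \<bullet> u = 0" if "q \<in> G" for q
  proof -
    have "q \<in> span F"
      using that G(3) span_base[of q "insert e G"] by auto
    then have "q \<bullet> u = norm z * (q \<bullet> e)"
      using inner_u \<open>z \<noteq> 0\<close> by (simp add: e_def)
    then show ?thesis
      using G(4) that by simp
  qed
  then show ?thesis
    using that G(1-3) by blast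
qed

lemma orthonormal_exchange:
  fixes M :: "real^'n^'m"
  assumes orth: "orthonormal F" and card: "card F \<le> Suc s"
    and bound: "\<And>w. norm w = 1 \<Longrightarrow> (norm (w v* M))\<^sup>2 \<le> c"
  obtains F' where "orthonormal F'" "card F' \<le> s" "\<forall>q\<in>F'. q \<bullet> u = 0"
    "(\<Sum>q\<in>F. (norm (q v* M))\<^sup>2) \<le> c + (\<Sum>q\<in>F'. (norm (q v* M))\<^sup>2)"
proof (cases "F = {}")
  case True
  have "0 \<le> c"
    using bound[of "axis undefined 1"] by (simp add: order_trans[OF zero_le_power2])
  then show ?thesis
    using that[of "{}"] True by (simp add: orthonormal_def)
next
  case False
  then obtain e G where eG: "e \<notin> G" "orthonormal (insert e G)" "span (insert e G) = span F"
    "\<forall>q\<in>G. q \<bullet> u = 0"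
    using orthonormal_split_off_orthogonal[OF orth] by metis
  have fin: "finite G"
    using orthonormal_finite[OF eG(2)] by simp
  have "Suc (card G) = card F"
    using orthonormal_card_eq[OF eG(2) orth eG(3)] eG(1) fin by simp
  then have "card G \<le> s"
    using card by simp
  have "orthonormal G"
    using eG(2) by (simp add: orthonormal_def pairwise_insert)
  have "(\<Sum>q\<in>F. (norm (q v* M))\<^sup>2) = (\<Sum>q\<in>insert e G. (norm (q v* M))\<^sup>2)"
    using sum_norm_vector_matrix_mult_span_eq[OF orth eG(2) eG(3)[symmetric]] .
  also have "\<dots> = (norm (e v* M))\<^sup>2 + (\<Sum>q\<in>G. (norm (q v* M))\<^sup>2)"
    using fin eG(1) by simp
  also have "\<dots> \<le> c + (\<Sum>q\<in>G. (norm (q v* M))\<^sup>2)"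
    using bound eG(2) by (simp add: orthonormal_def)
  finally show ?thesis
    using that \<open>orthonormal G\<close> \<open>card G \<le> s\<close> eG(4) by blast
qed

lemma quadratic_min_at_one:
  fixes m c :: real
  assumes "0 \<le> c" and min: "\<And>t. c - 2 * m \<le> t\<^sup>2 * c - 2 * t * m"
  shows "m = c"
proof -
  define d where "d = m - c"
  define h where "h = d / (c + 1)"
  have "0 \<le> h\<^sup>2 * c - 2 * h * d"
    using min[of "1 + h"] by (simp add: d_def power2_eq_square algebra_simps)
  also have "\<dots> = - (d\<^sup>2 * (c + 2)) / (c + 1)\<^sup>2"
    using \<open>0 \<le> c\<close>
    by (simp add: h_def divide_simps power2_eq_square) (simp add: algebra_simps)
  finally have "d\<^sup>2 * (c + 2) \<le> 0"
    using \<open>0 \<le> c\<close> by (auto simp: divide_le_0_iff)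
  then show ?thesis
    using \<open>0 \<le> c\<close> by (simp add: d_def mult_le_0_iff)
qed

lemma exact_rank1_min_le:
  assumes "exact_rank1_min M X a' b'"
  shows "(norm (M - outer b' a' ** X))\<^sup>2 \<le> (norm (M - outer b a ** X))\<^sup>2"
  using assms by (simp add: exact_rank1_min_def)

lemma exact_rank1_min_inner_eq:
  assumes "exact_rank1_min M X a' b'"
  shows "M \<bullet> (outer b' a' ** X) = (outer b' a' ** X) \<bullet> (outer b' a' ** X)"
proof (rule quadratic_min_at_one)
  define B where "B = outer b' a' ** X"
  show "0 \<le> B \<bullet> B"
    by simp
  fix t :: real
  have "outer (t *\<^sub>R b') a' ** X = t *\<^sub>R B"
    by (simp add: B_def outer_scaleR_left scalar_matrix_assoc)
  then have "(norm (M - B))\<^sup>2 \<le> (norm (M - t *\<^sub>R B))\<^sup>2"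
    using exact_rank1_min_le[OF assms, of "t *\<^sub>R b'" a'] by (simp add: B_def)
  then show "B \<bullet> B - 2 * (M \<bullet> B) \<le> t\<^sup>2 * (B \<bullet> B) - 2 * t * (M \<bullet> B)"
    using norm_diff_sq[of M B] norm_diff_sq[of M "t *\<^sub>R B"]
    by (simp add: power2_eq_square algebra_simps)
qed

lemma norm_diff_exact_rank1_min_sq:
  assumes "exact_rank1_min M X a' b'"
  shows "(norm (M - outer b' a' ** X))\<^sup>2 = (norm M)\<^sup>2 - (norm (outer b' a' ** X))\<^sup>2"
  using exact_rank1_min_inner_eq[OF assms] norm_diff_sq[of M "outer b' a' ** X"]
  by (simp add: power2_norm_eq_inner)

text \<open>Every row of \<open>M = W X\<close> lies in the row space of \<open>X\<close>, so \<open>w w\<^sup>T M\<close> is itself a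
  candidate \<open>b a\<^sup>T X\<close> of the rank-one problem.\<close>

lemma norm_vector_matrix_mult_le_exact_rank1_min:
  assumes "M = W ** X" "exact_rank1_min M X a' b'" "norm w = 1"
  shows "(norm (w v* M))\<^sup>2 \<le> (norm (outer b' a' ** X))\<^sup>2"
proof -
  have "orthonormal {w}"
    using assms(3) by (simp add: orthonormal_def)
  have "outer w (w v* W) ** X = left_proj {w} M"
    by (simp add: left_proj_def outer_matrix_mult assms(1) vector_matrix_mul_assoc)
  then have "(norm (M - outer b' a' ** X))\<^sup>2 \<le> (norm (M - left_proj {w} M))\<^sup>2"
    using exact_rank1_min_le[OF assms(2), of w "w v* W"] by simp
  also have "\<dots> = (norm M)\<^sup>2 - (norm (w v* M))\<^sup>2"
    using norm_diff_left_proj_sq[OF \<open>orthonormal {w}\<close>] by simp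
  finally show ?thesis
    using norm_diff_exact_rank1_min_sq[OF assms(2)] by simp
qed

definition best_rank_error :: "nat \<Rightarrow> real^'n^'m \<Rightarrow> real" where
  "best_rank_error s N = (INF F\<in>{F. orthonormal F \<and> card F \<le> s}. norm (N - left_proj F N))"

lemma best_rank_error_le:
  assumes "orthonormal F" "card F \<le> s"
  shows "best_rank_error s N \<le> norm (N - left_proj F N)"
  unfolding best_rank_error_def using assms by (intro cINF_lower bdd_belowI2[where m = 0]) auto

lemma best_rank_error_greatest:
  assumes "\<And>F. orthonormal F \<Longrightarrow> card F \<le> s \<Longrightarrow> c \<le> norm (N - left_proj F N)"
  shows "c \<le> best_rank_error s N"
  unfolding best_rank_error_def
proof (rule cINF_greatest)
  show "{F. orthonormal F \<and> card F \<le> s} \<noteq> {}"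
    by (auto simp: orthonormal_def intro: exI[of _ "{}"])
qed (use assms in auto)

lemma best_rank_error_0: "best_rank_error 0 (N :: real^'n^'m) = norm N"
proof (rule antisym)
  show "best_rank_error 0 N \<le> norm N"
    using best_rank_error_le[of "{}" 0 N] by (simp add: orthonormal_def left_proj_def)
  show "norm N \<le> best_rank_error 0 N"
  proof (rule best_rank_error_greatest)
    fix F :: "(real^'m) set"
    assume F: "orthonormal F" "card F \<le> 0"
    then have "F = {}"
      using orthonormal_finite[OF F(1)] by simp
    then show "norm N \<le> norm (N - left_proj F N)"
      by (simp add: left_proj_def)
  qed
qed

lemma best_rank_error_add_le:
  "best_rank_error s (N + D) \<le> best_rank_error s N + norm (D :: real^'n^'m)"
proof -
  have "best_rank_error s (N + D) - norm D \<le> best_rank_error s N"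
  proof (rule best_rank_error_greatest)
    fix F :: "(real^'m) set"
    assume F: "orthonormal F" "card F \<le> s"
    have "best_rank_error s (N + D) \<le> norm ((N + D) - left_proj F (N + D))"
      using F by (rule best_rank_error_le)
    also have "\<dots> = norm ((N - left_proj F N) + (D - left_proj F D))"
      by (simp add: left_proj_add algebra_simps)
    also have "\<dots> \<le> norm (N - left_proj F N) + norm D"
      by (rule order_trans[OF norm_triangle_ineq]) (simp add: norm_diff_left_proj_le[OF F(1)])
    finally show "best_rank_error s (N + D) - norm D \<le> norm (N - left_proj F N)"
      by simp
  qed
  then show ?thesis
    by simp
qed

text \<open>The exchange lemma moves the best \<open>s + 1\<close> directions for \<open>M\<close> to \<open>s\<close> directions
  orthogonal to \<open>b'\<close>, on which \<open>M\<close> and the deflated matrix agree, at the cost of one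
  rank-one energy \<open>\<parallel>b' a'\<^sup>T X\<parallel>\<^sup>2\<close>.\<close>

lemma best_rank_error_exact_rank1_deflation:
  fixes M :: "real^'n^'m" and X :: "real^'n^'d" and W :: "real^'d^'m"
  assumes "M = W ** X" "exact_rank1_min M X a' b'"
  shows "best_rank_error s (M - outer b' a' ** X) \<le> best_rank_error (Suc s) M"
proof (rule best_rank_error_greatest)
  define B where "B = outer b' a' ** X"
  fix F :: "(real^'m) set"
  assume F: "orthonormal F" "card F \<le> Suc s"
  obtain F' where F': "orthonormal F'" "card F' \<le> s" "\<forall>q\<in>F'. q \<bullet> b' = 0"
    "(\<Sum>q\<in>F. (norm (q v* M))\<^sup>2) \<le> (norm B)\<^sup>2 + (\<Sum>q\<in>F'. (norm (q v* M))\<^sup>2)"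
    using orthonormal_exchange[OF F, where u = b']
      norm_vector_matrix_mult_le_exact_rank1_min[OF assms] B_def by metis
  have "q v* (M - B) = q v* M" if "q \<in> F'" for q
    using F'(3) that
    by (simp add: B_def vector_matrix_mult_diff_rdistrib outer_matrix_mult vector_matrix_mult_outer)
  then have "(norm ((M - B) - left_proj F' (M - B)))\<^sup>2
      = (norm M)\<^sup>2 - (norm B)\<^sup>2 - (\<Sum>q\<in>F'. (norm (q v* M))\<^sup>2)"
    using norm_diff_left_proj_sq[OF F'(1), of "M - B"] norm_diff_exact_rank1_min_sq[OF assms(2)]
    by (simp add: B_def)
  also have "\<dots> \<le> (norm (M - left_proj F M))\<^sup>2"
    using norm_diff_left_proj_sq[OF F(1), of M] F'(4) by simp
  finally have "norm ((M - B) - left_proj F' (M - B)) \<le> norm (M - left_proj F M)"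
    by (rule power2_le_imp_le) simp
  then show "best_rank_error s (M - outer b' a' ** X) \<le> norm (M - left_proj F M)"
    using best_rank_error_le[OF F'(1,2), of "M - B"] by (simp add: B_def)
qed

lemma singular_values_nonneg:
  assumes "singular_values Y \<sigma>" "1 \<le> j"
  shows "0 \<le> \<sigma> j"
  using assms unfolding singular_values_def by (metis atLeastAtMost_iff less_eq_real_def not_le)

lemma orthonormal_family_image:
  assumes "\<forall>j\<in>K. \<forall>k\<in>K. e j \<bullet> e k = (if j = k then 1 else 0)"
  shows "orthonormal (e ` K)" and "inj_on e K"
proof -
  show "inj_on e K"
  proof (rule inj_onI)
    fix j k
    assume "j \<in> K" "k \<in> K" "e j = e k"
    then show "j = k"
      using assms by (metis zero_neq_one)
  qed
  show "orthonormal (e ` K)"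
    using assms by (auto simp: orthonormal_def pairwise_def orthogonal_def norm_eq_1)
qed

lemma vector_matrix_mult_svd:
  assumes "\<forall>j\<in>K. \<forall>k\<in>K. u j \<bullet> u k = (if j = k then 1 else 0)" "finite K" "i \<in> K"
  shows "u i v* (\<Sum>k\<in>K. \<sigma> k *\<^sub>R outer (u k) (v k)) = \<sigma> i *\<^sub>R v i"
proof -
  have "u i v* (\<Sum>k\<in>K. \<sigma> k *\<^sub>R outer (u k) (v k)) = (\<Sum>k\<in>K. if i = k then \<sigma> k *\<^sub>R v k else 0)"
    unfolding vector_matrix_mult_sum vector_scaleR_matrix_ac vector_matrix_mult_outer
    using assms(1,3) by (intro sum.cong refl) auto
  then show ?thesis
    using assms(2,3) by simp
qed

lemma norm_vector_matrix_mult_le_singular_value: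
  fixes X :: "real^'n^'d"
  assumes sv: "singular_values X \<sigma>"
  shows "norm (w v* X) \<le> \<sigma> 1 * norm w"
proof -
  obtain u :: "nat \<Rightarrow> real^'d" and v :: "nat \<Rightarrow> real^'n" where
    uo: "\<forall>j\<in>{1..rank X}. \<forall>k\<in>{1..rank X}. u j \<bullet> u k = (if j = k then 1 else 0)" and
    vo: "\<forall>j\<in>{1..rank X}. \<forall>k\<in>{1..rank X}. v j \<bullet> v k = (if j = k then 1 else 0)" and
    X: "X = (\<Sum>k\<in>{1..rank X}. \<sigma> k *\<^sub>R outer (u k) (v k))"
    using sv unfolding singular_values_def by blast
  let ?K = "{1..rank X}"
  have "w v* X = (\<Sum>k\<in>?K. (\<sigma> k * (w \<bullet> u k)) *\<^sub>R v k)"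
    by (subst X) (simp add: vector_matrix_mult_sum vector_scaleR_matrix_ac vector_matrix_mult_outer)
  then have "(norm (w v* X))\<^sup>2 = (\<Sum>k\<in>?K. (\<sigma> k * (w \<bullet> u k))\<^sup>2)"
    using norm_sum_orthonormal_sq[OF _ vo] by simp
  also have "\<dots> \<le> (\<Sum>k\<in>?K. (\<sigma> 1)\<^sup>2 * (w \<bullet> u k)\<^sup>2)"
  proof (rule sum_mono)
    fix k
    assume "k \<in> ?K"
    then have "0 < \<sigma> k" "\<sigma> k \<le> \<sigma> 1"
      using sv unfolding singular_values_def by auto
    then show "(\<sigma> k * (w \<bullet> u k))\<^sup>2 \<le> (\<sigma> 1)\<^sup>2 * (w \<bullet> u k)\<^sup>2"
      by (simp add: power_mult_distrib mult_right_mono power_mono)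
  qed
  also have "\<dots> \<le> (\<sigma> 1)\<^sup>2 * (norm w)\<^sup>2"
    using bessel_inequality[OF _ uo, of w] by (simp add: sum_distrib_left[symmetric] mult_left_mono)
  finally have "(norm (w v* X))\<^sup>2 \<le> (\<sigma> 1 * norm w)\<^sup>2"
    by (simp add: power_mult_distrib)
  then show ?thesis
    by (rule power2_le_imp_le) (simp add: singular_values_nonneg[OF sv])
qed

lemma norm_matrix_mult_le_singular_value:
  fixes X :: "real^'n^'d" and D :: "real^'d^'m"
  assumes sv: "singular_values X \<sigma>"
  shows "norm (D ** X) \<le> \<sigma> 1 * norm D"
proof -
  have "(norm (D ** X))\<^sup>2 = (\<Sum>i\<in>UNIV. (norm (D $ i v* X))\<^sup>2)"
    by (simp add: norm_matrix_sq_rows matrix_mult_row)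
  also have "\<dots> \<le> (\<Sum>i\<in>UNIV. (\<sigma> 1 * norm (D $ i))\<^sup>2)"
    by (intro sum_mono power_mono norm_vector_matrix_mult_le_singular_value[OF sv]) simp
  also have "\<dots> = (\<sigma> 1 * norm D)\<^sup>2"
    by (simp add: power_mult_distrib norm_matrix_sq_rows[of D] sum_distrib_left)
  finally show ?thesis
    by (rule power2_le_imp_le) (simp add: singular_values_nonneg[OF sv])
qed

lemma best_rank_error_le_tail:
  fixes Y :: "real^'n^'m"
  assumes sv: "singular_values Y \<sigma>" and r: "r \<le> rank Y"
  shows "best_rank_error r Y \<le> (\<Sum>k=r+1..rank Y. \<sigma> k)"
proof -
  define p where "p = rank Y"
  obtain u :: "nat \<Rightarrow> real^'m" and v :: "nat \<Rightarrow> real^'n" where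
    uo: "\<forall>j\<in>{1..p}. \<forall>k\<in>{1..p}. u j \<bullet> u k = (if j = k then 1 else 0)" and
    vo: "\<forall>j\<in>{1..p}. \<forall>k\<in>{1..p}. v j \<bullet> v k = (if j = k then 1 else 0)" and
    Y: "Y = (\<Sum>k=1..p. \<sigma> k *\<^sub>R outer (u k) (v k))"
    using sv unfolding singular_values_def p_def by blast
  let ?F = "u ` {1..r}" and ?g = "\<lambda>k. \<sigma> k *\<^sub>R outer (u k) (v k)"
  have rp: "r \<le> p"
    using r by (simp add: p_def)
  have uo_r: "\<forall>j\<in>{1..r}. \<forall>k\<in>{1..r}. u j \<bullet> u k = (if j = k then 1 else 0)"
    using uo rp by auto
  have "left_proj ?F Y = (\<Sum>i=1..r. outer (u i) (u i v* Y))"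
    using orthonormal_family_image(2)[OF uo_r] by (simp add: left_proj_def sum.reindex)
  also have "\<dots> = (\<Sum>i=1..r. ?g i)"
  proof (rule sum.cong[OF refl])
    fix i
    assume "i \<in> {1..r}"
    then have "i \<in> {1..p}"
      using rp by simp
    then show "outer (u i) (u i v* Y) = ?g i"
      unfolding Y using vector_matrix_mult_svd[OF uo, of i \<sigma> v]
      by (simp add: outer_scaleR_right)
  qed
  also have "\<dots> = Y - (\<Sum>k=r+1..p. ?g k)"
    using sum.ub_add_nat[of 1 r ?g "p - r"] rp by (simp add: Y)
  finally have "Y - left_proj ?F Y = (\<Sum>k=r+1..p. ?g k)"
    by simp
  then have "norm (Y - left_proj ?F Y) \<le> (\<Sum>k=r+1..p. norm (?g k))"
    by (simp only: norm_sum)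
  also have "\<dots> = (\<Sum>k=r+1..p. \<sigma> k)"
  proof (rule sum.cong[OF refl])
    fix k
    assume "k \<in> {r+1..p}"
    then have "norm (u k) = 1" "norm (v k) = 1" "0 \<le> \<sigma> k"
      using uo vo singular_values_nonneg[OF sv, of k] by (auto simp: norm_eq_1)
    then show "norm (?g k) = \<sigma> k"
      by (simp add: norm_outer)
  qed
  finally show ?thesis
    using best_rank_error_le[OF orthonormal_family_image(1)[OF uo_r], of r Y]
      card_image_le[of "{1..r}" u]
    by (simp add: p_def)
qed

lemma seq_resid_eq_diff_sum: "seq_resid X Y a b k = Y - (\<Sum>i=1..k. outer (b i) (a i) ** X)"
  by (induction k) simp_all

lemma seq_resid_matrix_mult:
  "seq_resid X (W ** X) a b k = (W - (\<Sum>i=1..k. outer (b i) (a i))) ** X"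
  by (induction k) (simp_all add: matrix_diff_rdistrib matrix_add_rdistrib algebra_simps)

lemma best_rank_error_seq_resid:
  fixes X :: "real^'n^'d" and W :: "real^'d^'m"
  assumes sv: "singular_values X \<sigma>"
    and min: "\<forall>k\<in>{1..r}. exact_rank1_min (seq_resid X (W ** X) a b (k - 1)) X (abar k) (bbar k)"
    and "k \<le> r"
  shows "best_rank_error (r - k) (seq_resid X (W ** X) a b k)
    \<le> best_rank_error r (W ** X)
      + \<sigma> 1 * (\<Sum>i=1..k. norm (outer (b i) (a i) - outer (bbar i) (abar i)))"
  using \<open>k \<le> r\<close>
proof (induction k)
  case 0
  then show ?case
    by simp
next
  case (Suc k)
  let ?R = "seq_resid X (W ** X) a b k" and ?B = "outer (bbar (Suc k)) (abar (Suc k)) ** X"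
    and ?\<delta> = "outer (b (Suc k)) (a (Suc k)) - outer (bbar (Suc k)) (abar (Suc k))"
  have opt: "exact_rank1_min ?R X (abar (Suc k)) (bbar (Suc k))"
    using min[rule_format, of "Suc k"] Suc.prems by simp
  have split: "seq_resid X (W ** X) a b (Suc k) = (?R - ?B) + - (?\<delta> ** X)"
    by (simp add: matrix_diff_rdistrib)
  have "best_rank_error (r - Suc k) (seq_resid X (W ** X) a b (Suc k))
      \<le> best_rank_error (r - Suc k) (?R - ?B) + norm (?\<delta> ** X)"
    unfolding split using best_rank_error_add_le[of "r - Suc k" "?R - ?B" "- (?\<delta> ** X)"]
    by (simp only: norm_minus_cancel)
  also have "\<dots> \<le> best_rank_error (Suc (r - Suc k)) ?R + \<sigma> 1 * norm ?\<delta>"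
    using best_rank_error_exact_rank1_deflation[OF seq_resid_matrix_mult opt]
      norm_matrix_mult_le_singular_value[OF sv] by (rule add_mono)
  also have "Suc (r - Suc k) = r - k"
    using Suc.prems by simp
  finally show ?case
    using Suc by (simp add: algebra_simps)
qed

lemma Tstar_nonneg: "0 \<le> \<sigma> k \<Longrightarrow> 0 \<le> Tstar \<sigma> p k"
  unfolding Tstar_def by (subst Min_ge_iff) auto

lemma le_sum_mult_prod_last:
  fixes f c :: "nat \<Rightarrow> real"
  assumes "\<And>i. i \<le> k \<Longrightarrow> 0 \<le> f i" and "\<And>j. j \<in> {1..k} \<Longrightarrow> 0 \<le> c j"
  shows "f k \<le> (\<Sum>i=0..k. f i * (\<Prod>j\<in>{i+1..k}. c j))"
proof -
  have "f k = f k * (\<Prod>j\<in>{k+1..k}. c j)"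
    by simp
  also have "\<dots> \<le> (\<Sum>i=0..k. f i * (\<Prod>j\<in>{i+1..k}. c j))"
    using assms by (intro member_le_sum[where f = "\<lambda>i. f i * (\<Prod>j\<in>{i+1..k}. c j)"]
        mult_nonneg_nonneg prod_nonneg) auto
  finally show ?thesis .
qed

theorem theorem1:
  fixes X :: "real^'n^'d" and Wstar :: "real^'d^'m" and Y :: "real^'n^'m"
    and \<sigma> :: "nat \<Rightarrow> real" and \<sigma>X :: "nat \<Rightarrow> real" and p r :: nat
    and a abar :: "nat \<Rightarrow> real^'d" and b bbar :: "nat \<Rightarrow> real^'m"
    and \<delta> :: "nat \<Rightarrow> real^'d^'m" and T E :: "nat \<Rightarrow> real"
  assumes hY: "Y = Wstar ** X"
    and hp: "p = rank Y"
    and hsig: "singular_values Y \<sigma>"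
    and hsigX: "singular_values X \<sigma>X"
    and hr: "1 \<le> r" "r \<le> p"
    and hmin: "\<forall>k\<in>{1..r}. exact_rank1_min (seq_resid X Y a b (k - 1)) X (abar k) (bbar k)"
    and hdelta: "\<forall>k\<in>{1..r}. \<delta> k = outer (b k) (a k) - outer (bbar k) (abar k)"
    and hdelta0: "\<delta> 0 = 0"
    and hpos: "\<forall>k\<in>{1..r}. norm (\<delta> k) > 0"
    and hT: "\<forall>k\<in>{1..r}. T k = Tstar \<sigma> p k"
    and hE: "\<forall>k\<in>{1..r}. E k = \<sigma>X 1 * (\<Sum>k'=0..k-1. norm (\<delta> k') *
                 (\<Prod>j\<in>{k'+1..k-1}. 2 + 6 * \<sigma> j / T k))"
    and hsmall: "\<forall>k\<in>{1..r}. \<forall>j. k < j \<and> j \<le> p \<longrightarrow> E k < 1/2 * \<bar>\<sigma> k - \<sigma> j\<bar>"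
  shows "norm (Y - (\<Sum>k=1..r. outer (b k) (a k) ** X))
           \<le> (\<Sum>k=r+1..p. \<sigma> k)
             + \<sigma>X 1 * (\<Sum>k=1..r. \<Sum>k'=0..k. norm (\<delta> k') *
                 (\<Prod>j\<in>{k'+1..k}. 2 + 6 * \<sigma> j / T k))"
proof -
  have "norm (Y - (\<Sum>k=1..r. outer (b k) (a k) ** X)) = best_rank_error 0 (seq_resid X Y a b r)"
    by (simp add: best_rank_error_0 seq_resid_eq_diff_sum)
  also have "\<dots> \<le> best_rank_error r Y + \<sigma>X 1 * (\<Sum>k=1..r. norm (\<delta> k))"
    using best_rank_error_seq_resid[OF hsigX, of r Wstar a b abar bbar r] hmin hdelta hY by simp
  also have "\<dots> \<le> (\<Sum>k=r+1..p. \<sigma> k) + \<sigma>X 1 * (\<Sum>k=1..r. \<Sum>k'=0..k. norm (\<delta> k') *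
                 (\<Prod>j\<in>{k'+1..k}. 2 + 6 * \<sigma> j / T k))"
  proof (intro add_mono mult_left_mono sum_mono)
    show "best_rank_error r Y \<le> (\<Sum>k=r+1..p. \<sigma> k)"
      using best_rank_error_le_tail[OF hsig] hr hp by simp
    fix k
    assume "k \<in> {1..r}"
    then have "0 \<le> T k"
      using hT Tstar_nonneg singular_values_nonneg[OF hsig] by simp
    then show "norm (\<delta> k) \<le> (\<Sum>k'=0..k. norm (\<delta> k') * (\<Prod>j\<in>{k'+1..k}. 2 + 6 * \<sigma> j / T k))"
      using singular_values_nonneg[OF hsig] by (intro le_sum_mult_prod_last) simp_all
  qed (simp add: singular_values_nonneg[OF hsigX])
  finally show ?thesis .
qed

end
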